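(* Let $S\subset\mathbb{R}^d$ be a nonempty compact convex set with diameter $D:=\sup_{x,y\in S}\|x-y\|$, and let $f$ be differentiable on $S$ with $L$-Lipschitz gradient on $S$. Let $G:=\sup_{x\in S}\|\nabla f(x)\|<\infty$ and fix a constant $C\ge\max\{LD^2,\,GD\}$ (with $C>0$). Let $\delta\ge 0$, and suppose that for every $x\in S$ a vector $g_\delta(x)\in\mathbb{R}^d$ is available with \[ \big|\langle \nabla f(x)-g_\delta(x),\,s-x\rangle\big|\le\delta\quad\text{for all } s\in S. \] Given $x^0\in S$, define iterates for $k=0,1,2,\dots$ by choosing $s^k\in\arg\min_{s\in S}\langle g_\delta(x^k),\,s-x^k\rangle$, setting $\tilde g_k:=\langle g_\delta(x^k),\,x^k-s^k\rangle$, $\overline\alpha_k:=(\tilde g_k-\delta)_+/C$ where $(u)_+:=\max\{u,0\}$, and $x^{k+1}:=x^k+\overline\alpha_k(s^k-x^k)$. Then for every $k\ge 0$, \[ f(x^{k+1})\le f(x^k)-\frac{(\tilde g_k-\delta)_+^2}{2C}. \]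
   Context: $\|\cdot\|$ is the Euclidean norm and $\langle\cdot,\cdot\rangle$ the Euclidean inner product. $f$ need not be convex. *)

theory Defs
  imports "HOL-Analysis.Analysis"
begin

end

theory Submission
  imports Defs
begin

text \<open>
  By the descent lemma, a step of length \<open>\<alpha>\<close> along \<open>s - x\<close> decreases \<open>f\<close> by at least
  \<open>\<alpha> \<langle>\<nabla>f(x), x - s\<rangle> - \<alpha>\<^sup>2 L \<parallel>s - x\<parallel>\<^sup>2 / 2\<close>. The inexactness bound gives
  \<open>\<langle>\<nabla>f(x), x - s\<rangle> \<ge> g\<^sub>k - \<delta>\<close> for the computed gap \<open>g\<^sub>k\<close>, and \<open>C\<close> dominates both
  \<open>L \<parallel>s - x\<parallel>\<^sup>2\<close> and \<open>\<langle>\<nabla>f(x), x - s\<rangle>\<close>. Hence the decrease is at least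
  \<open>\<alpha> u - \<alpha>\<^sup>2 C / 2\<close> with \<open>u = (g\<^sub>k - \<delta>)\<^sub>+\<close>, whose maximiser \<open>\<alpha> = u / C\<close> lies in
  \<open>[0, 1]\<close>, so the iterate stays in \<open>S\<close>.
\<close>

lemma convex_step_mem:
  assumes "convex S" "x \<in> S" "y \<in> S" "0 \<le> a" "a \<le> 1"
  shows "x + a *\<^sub>R (y - x) \<in> S"
proof -
  have "x + a *\<^sub>R (y - x) = (1 - a) *\<^sub>R x + a *\<^sub>R y"
    by (simp add: algebra_simps)
  then show ?thesis
    using convexD_alt[OF assms] by simp
qed

lemma norm_diff_le_diameter:
  fixes a b :: "'a::real_normed_vector"
  assumes "bounded S" "a \<in> S" "b \<in> S"
  shows "norm (a - b) \<le> diameter S"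
  using diameter_bounded_bound[OF assms] by (simp add: dist_norm)

lemma lipschitz_gradient_quadratic_upper_bound:
  fixes S :: "'a::real_inner set" and f :: "'a \<Rightarrow> real" and grad_f :: "'a \<Rightarrow> 'a"
  assumes "convex S"
    and f_diff: "\<And>y. y \<in> S \<Longrightarrow> (f has_derivative (\<lambda>h. grad_f y \<bullet> h)) (at y)"
    and grad_lip: "\<And>y z. y \<in> S \<Longrightarrow> z \<in> S \<Longrightarrow> norm (grad_f y - grad_f z) \<le> L * norm (y - z)"
    and "x \<in> S" "y \<in> S"
  shows "f y \<le> f x + grad_f x \<bullet> (y - x) + L / 2 * (norm (y - x))\<^sup>2"
proof -
  define h where "h = y - x"
  define \<phi> where "\<phi> t = f (x + t *\<^sub>R h) - t * (grad_f x \<bullet> h) - L / 2 * t\<^sup>2 * (norm h)\<^sup>2" for t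
  have "\<phi> 1 \<le> \<phi> 0"
  proof (rule DERIV_nonpos_imp_nonincreasing[of 0 1 \<phi>])
    fix t :: real
    assume t: "0 \<le> t" "t \<le> 1"
    have xt: "x + t *\<^sub>R h \<in> S"
      using convex_step_mem[OF assms(1,4,5) t] by (simp add: h_def)
    have "((\<lambda>t. x + t *\<^sub>R h) has_derivative (\<lambda>u. u *\<^sub>R h)) (at t)"
      by (auto intro!: derivative_eq_intros)
    from has_derivative_compose[OF this f_diff[OF xt]]
    have "((\<lambda>t. f (x + t *\<^sub>R h)) has_derivative (\<lambda>u. grad_f (x + t *\<^sub>R h) \<bullet> (u *\<^sub>R h))) (at t)"
      by (simp add: o_def)
    then have f_deriv: "((\<lambda>t. f (x + t *\<^sub>R h)) has_real_derivative grad_f (x + t *\<^sub>R h) \<bullet> h) (at t)"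
      by (simp add: has_field_derivative_def mult.commute[of _ "grad_f (x + t *\<^sub>R h) \<bullet> h"])
    have deriv: "(\<phi> has_real_derivative
        grad_f (x + t *\<^sub>R h) \<bullet> h - grad_f x \<bullet> h - L * t * (norm h)\<^sup>2) (at t)"
      unfolding \<phi>_def by (rule derivative_eq_intros f_deriv refl | simp)+
    have "grad_f (x + t *\<^sub>R h) \<bullet> h - grad_f x \<bullet> h = (grad_f (x + t *\<^sub>R h) - grad_f x) \<bullet> h"
      by (simp add: inner_diff_left)
    also have "\<dots> \<le> norm (grad_f (x + t *\<^sub>R h) - grad_f x) * norm h"
      by (rule norm_cauchy_schwarz)
    also have "\<dots> \<le> L * norm (t *\<^sub>R h) * norm h"
      using grad_lip[OF xt \<open>x \<in> S\<close>] by (intro mult_right_mono) auto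
    also have "\<dots> = L * t * (norm h)\<^sup>2"
      using t by (simp add: power2_eq_square)
    finally show "\<exists>y. (\<phi> has_real_derivative y) (at t) \<and> y \<le> 0"
      using deriv by auto
  qed simp
  then show ?thesis
    by (simp add: \<phi>_def h_def)
qed

lemma clipped_step_descent:
  fixes S :: "'a::real_inner set" and f :: "'a \<Rightarrow> real" and grad_f :: "'a \<Rightarrow> 'a"
  assumes "convex S"
    and f_diff: "\<And>y. y \<in> S \<Longrightarrow> (f has_derivative (\<lambda>h. grad_f y \<bullet> h)) (at y)"
    and grad_lip: "\<And>y z. y \<in> S \<Longrightarrow> z \<in> S \<Longrightarrow> norm (grad_f y - grad_f z) \<le> L * norm (y - z)"
    and "x \<in> S" "s \<in> S" "C > 0"
    and v_le: "v \<le> grad_f x \<bullet> (x - s)"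
    and slope_le: "grad_f x \<bullet> (x - s) \<le> C"
    and curvature_le: "L * (norm (s - x))\<^sup>2 \<le> C"
  defines "x' \<equiv> x + (max v 0 / C) *\<^sub>R (s - x)"
  shows "x' \<in> S" and "f x' \<le> f x - (max v 0)\<^sup>2 / (2 * C)"
proof -
  define u where "u = max v 0"
  define a where "a = u / C"
  have a: "0 \<le> a" "a \<le> 1"
    using v_le slope_le \<open>C > 0\<close> by (auto simp: a_def u_def)
  show "x' \<in> S"
    using convex_step_mem[OF \<open>convex S\<close> \<open>x \<in> S\<close> \<open>s \<in> S\<close> a] by (simp add: x'_def a_def u_def)
  have linear: "grad_f x \<bullet> (a *\<^sub>R (s - x)) \<le> - a * u"
  proof (cases "v \<le> 0")
    case False
    then have "grad_f x \<bullet> (s - x) \<le> - u"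
      using v_le by (simp add: u_def inner_diff_right)
    from mult_left_mono[OF this \<open>0 \<le> a\<close>]
    show ?thesis
      by simp
  qed (simp add: a_def u_def)
  have "L / 2 * (norm (a *\<^sub>R (s - x)))\<^sup>2 = a\<^sup>2 / 2 * (L * (norm (s - x))\<^sup>2)"
    by (simp add: power_mult_distrib)
  also have "\<dots> \<le> a\<^sup>2 / 2 * C"
    using curvature_le by (intro mult_left_mono) auto
  finally have quadratic: "L / 2 * (norm (a *\<^sub>R (s - x)))\<^sup>2 \<le> a\<^sup>2 / 2 * C" .
  have "f x' \<le> f x + grad_f x \<bullet> (a *\<^sub>R (s - x)) + L / 2 * (norm (a *\<^sub>R (s - x)))\<^sup>2"
    using lipschitz_gradient_quadratic_upper_bound[OF \<open>convex S\<close> f_diff grad_lip \<open>x \<in> S\<close> \<open>x' \<in> S\<close>]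
    by (simp add: x'_def a_def u_def)
  also have "\<dots> \<le> f x - a * u + a\<^sup>2 / 2 * C"
    using linear quadratic by simp
  also have "\<dots> = f x - u\<^sup>2 / (2 * C)"
    using \<open>C > 0\<close> by (simp add: a_def field_simps power2_eq_square)
  finally show "f x' \<le> f x - (max v 0)\<^sup>2 / (2 * C)"
    by (simp add: u_def)
qed

lemma curvature_constant_bounds:
  fixes S :: "'a::real_inner set" and grad_f :: "'a \<Rightarrow> 'a"
  assumes "bounded S" and G_fin: "bdd_above ((\<lambda>y. norm (grad_f y)) ` S)"
    and "x \<in> S" "s \<in> S" "C > 0"
    and C_ge1: "C \<ge> L * (diameter S)\<^sup>2"
    and C_ge2: "C \<ge> (SUP y\<in>S. norm (grad_f y)) * diameter S"
  shows "grad_f x \<bullet> (x - s) \<le> C" and "L * (norm (s - x))\<^sup>2 \<le> C"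
proof -
  have D: "norm (s - x) \<le> diameter S" "norm (x - s) \<le> diameter S"
    using norm_diff_le_diameter[OF \<open>bounded S\<close>] \<open>x \<in> S\<close> \<open>s \<in> S\<close> by auto
  have G: "norm (grad_f x) \<le> (SUP y\<in>S. norm (grad_f y))"
    using cSUP_upper[OF \<open>x \<in> S\<close> G_fin] .
  have "grad_f x \<bullet> (x - s) \<le> norm (grad_f x) * norm (x - s)"
    by (rule norm_cauchy_schwarz)
  also have "\<dots> \<le> (SUP y\<in>S. norm (grad_f y)) * diameter S"
    by (rule mult_mono[OF G D(2) order_trans[OF norm_ge_zero G] norm_ge_zero])
  finally show "grad_f x \<bullet> (x - s) \<le> C"
    using C_ge2 by linarith
  show "L * (norm (s - x))\<^sup>2 \<le> C"
  proof (cases "L \<ge> 0")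
    case True
    then have "L * (norm (s - x))\<^sup>2 \<le> L * (diameter S)\<^sup>2"
      using mult_left_mono[OF power_mono[OF D(1) norm_ge_zero] True] by simp
    then show ?thesis
      using C_ge1 by linarith
  next
    case False
    then have "L * (norm (s - x))\<^sup>2 \<le> 0"
      by (simp add: mult_nonpos_nonneg)
    then show ?thesis
      using \<open>C > 0\<close> by linarith
  qed
qed

lemma inexact_gradient_gap_le:
  fixes p q x s :: "'a::real_inner"
  assumes "\<bar>(p - q) \<bullet> (s - x)\<bar> \<le> \<delta>"
  shows "q \<bullet> (x - s) - \<delta> \<le> p \<bullet> (x - s)"
  using abs_le_D1[OF assms] by (simp add: inner_diff_left inner_diff_right)

theorem lemma2:
  fixes S :: "'a::euclidean_space set"
    and f :: "'a \<Rightarrow> real" and grad_f :: "'a \<Rightarrow> 'a"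
    and g :: "'a \<Rightarrow> 'a"
    and L C \<delta> :: real
    and x s :: "nat \<Rightarrow> 'a"
  assumes S_ne: "S \<noteq> {}" and S_compact: "compact S" and S_convex: "convex S"
    and f_diff: "\<And>y. y \<in> S \<Longrightarrow> (f has_derivative (\<lambda>h. grad_f y \<bullet> h)) (at y)"
    and grad_lip: "\<And>y z. y \<in> S \<Longrightarrow> z \<in> S \<Longrightarrow> norm (grad_f y - grad_f z) \<le> L * norm (y - z)"
    and G_fin: "bdd_above ((\<lambda>y. norm (grad_f y)) ` S)"
    and C_pos: "C > 0"
    and C_ge1: "C \<ge> L * (diameter S)\<^sup>2"
    and C_ge2: "C \<ge> (SUP y\<in>S. norm (grad_f y)) * diameter S"
    and delta_nonneg: "\<delta> \<ge> 0"
    and g_inexact: "\<And>y t. y \<in> S \<Longrightarrow> t \<in> S \<Longrightarrow> \<bar>(grad_f y - g y) \<bullet> (t - y)\<bar> \<le> \<delta>"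
    and x0: "x 0 \<in> S"
    and s_in: "\<And>k. s k \<in> S"
    and s_min: "\<And>k t. t \<in> S \<Longrightarrow> g (x k) \<bullet> (s k - x k) \<le> g (x k) \<bullet> (t - x k)"
    and x_step: "\<And>k. x (Suc k) = x k + (max (g (x k) \<bullet> (x k - s k) - \<delta>) 0 / C) *\<^sub>R (s k - x k)"
  shows "\<forall>k. f (x (Suc k)) \<le> f (x k) - (max (g (x k) \<bullet> (x k - s k) - \<delta>) 0)\<^sup>2 / (2 * C)"
proof -
  have "bounded S"
    using S_compact by (rule compact_imp_bounded)
  have step: "x (Suc k) \<in> S \<and>
      f (x (Suc k)) \<le> f (x k) - (max (g (x k) \<bullet> (x k - s k) - \<delta>) 0)\<^sup>2 / (2 * C)"
    if xk: "x k \<in> S" for k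
    using clipped_step_descent[OF S_convex f_diff grad_lip xk s_in[of k] C_pos
        inexact_gradient_gap_le[OF g_inexact[OF xk s_in[of k]]]
        curvature_constant_bounds[OF \<open>bounded S\<close> G_fin xk s_in[of k] C_pos C_ge1 C_ge2]]
    by (simp add: x_step)
  have "x k \<in> S" for k
    by (induction k) (use x0 step in auto)
  with step show ?thesis
    by blast
qed

end
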